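(* Fix $\lambda>0$ and let $M_\lambda(x)=E[v_{x,\lambda}]$ for $x\ge 0$, where $v_{x,\lambda}$ is the number of unit intervals at saturation in the exponential parking process on $(0,x)$ described in the context. Then $M_\lambda(x)=0$ for $0\le x\le 1$, and for all $x>0$, \[ M_{\lambda}(x+1)=\int_0^x\frac{\lambda e^{-\lambda t}}{1-e^{-\lambda x}}\bigl(M_{\lambda}(t)+M_{\lambda}(x-t)\bigr)\,dt+1 . \]
   Context: Exponential parking process: fix $\lambda>0$ and $x\ge 0$. Open unit intervals are placed one at a time in $(0,x)$. For each candidate, the left endpoint is drawn independently with density $f(t;\lambda,x)=\frac{\lambda e^{-\lambda t}}{1-e^{-\lambda(x-1)}}$ for $0<t<x-1$, and $0$ otherwise. A candidate that intersects a previously placed interval is discarded, and the procedure is repeated. The process stops at saturation, i.e. when no further open unit interval contained in $(0,x)$ can be placed disjoint from the ones already placed. The random variable $v_{x,\lambda}$ is the number of intervals present at saturation; $v_{x,\lambda}=0$ when $x\le 1$. *)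

theory Defs
  imports "HOL-Probability.Probability"
begin

text \<open>Density of the left endpoint of a candidate interval in the exponential
  parking process on (0,x) with rate l.\<close>
definition park_dens :: "real \<Rightarrow> real \<Rightarrow> real \<Rightarrow> real" where
  "park_dens l x t =
     (if 0 < t \<and> t < x - 1 then l * exp (- l * t) / (1 - exp (- l * (x - 1))) else 0)"

definition park_cand :: "real \<Rightarrow> real \<Rightarrow> real measure" where
  "park_cand l x = density lborel (\<lambda>t. ennreal (park_dens l x t))"

text \<open>Open unit intervals (s,s+1) and (t,t+1) are disjoint iff |s - t| >= 1.
  One step: the candidate with left endpoint t is kept iff it is disjoint from
  all placed intervals (given by their left endpoints).\<close>
definition park_step :: "real set \<Rightarrow> real \<Rightarrow> real set" where
  "park_step S t = (if \<forall>s\<in>S. \<bar>s - t\<bar> \<ge> 1 then insert t S else S)"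

fun park_placed :: "real stream \<Rightarrow> nat \<Rightarrow> real set" where
  "park_placed w 0 = {}"
| "park_placed w (Suc n) = park_step (park_placed w n) (w !! n)"

definition park_saturated :: "real \<Rightarrow> real set \<Rightarrow> bool" where
  "park_saturated x S \<longleftrightarrow>
     \<not> (\<exists>a. 0 \<le> a \<and> a + 1 \<le> x \<and> (\<forall>s\<in>S. \<bar>s - a\<bar> \<ge> 1))"

text \<open>Number of intervals at saturation (the process stops at the first
  saturated time); on the null event that saturation is never reached we
  put 0.  For x <= 1 the count is 0 by convention.\<close>
definition park_count :: "real \<Rightarrow> real stream \<Rightarrow> real" where
  "park_count x w =
     (if x \<le> 1 then 0
      else if \<exists>n. park_saturated x (park_placed w n)
      then real (card (park_placed w (LEAST n. park_saturated x (park_placed w n))))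
      else 0)"

definition park_M :: "real \<Rightarrow> real \<Rightarrow> real" where
  "park_M l x = (if x \<le> 1 then 0
                 else integral\<^sup>L (stream_space (park_cand l x)) (park_count x))"

end

theory Submission
  imports Defs
begin

text \<open>
  Start the process from an arbitrary finite configuration S of placed left endpoints and let
  E(X,S) be the expected number of intervals at saturation. Conditioning on the first candidate
  s gives E(X,S) = E_s E(X, park_step S s); since rejected candidates leave S unchanged, this
  says that the set F of free positions of S satisfies P(F) E(X,S) = \<integral>_F E(X, S \<union> {s}) dP(s).

  Once an interval (t, t+1) is placed, the free set of S = L \<union> {t} \<union> (R + t + 1) splits into
  the free set of L in (0,t) and a shifted copy of the free set of R in (0, X-1-t), and by
  memorylessness the truncated exponential law restricted to either part is again a truncated
  exponential law. Hence E(X,S) and 1 + E(t,L) + E(X-1-t,R) satisfy the same recursion, and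
  a downward induction on the number of placed intervals (at most X of them) identifies them.
  The base case is a free set of measure zero, which (up to finitely many exceptional
  positions) means that S is saturated. Applying this to S = {s} for the first candidate s
  gives the integral equation.
\<close>

section \<open>Parking from a given configuration\<close>

definition park_free :: "real set \<Rightarrow> real set" where
  "park_free S = {a. \<forall>s\<in>S. 1 \<le> \<bar>s - a\<bar>}"

lemma closed_park_free: "closed (park_free S)"
proof -
  have "park_free S = (\<Inter>s\<in>S. {a. 1 \<le> \<bar>s - a\<bar>})"
    unfolding park_free_def by auto
  then show ?thesis
    by (auto intro!: closed_INT closed_Collect_le continuous_intros)
qed

lemma sets_park_free[measurable]: "park_free S \<in> sets borel"
  using closed_park_free by (rule borel_closed)

lemma park_free_not_in: "s \<in> park_free S \<Longrightarrow> s \<notin> S"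
  unfolding park_free_def by force

lemma park_step_eq: "park_step S s = (if s \<in> park_free S then insert s S else S)"
  unfolding park_step_def park_free_def by simp

fun park_from :: "real set \<Rightarrow> real stream \<Rightarrow> nat \<Rightarrow> real set" where
  "park_from S w 0 = S"
| "park_from S w (Suc n) = park_step (park_from S w n) (w !! n)"

lemma park_placed_eq_park_from: "park_placed w n = park_from {} w n"
  by (induct n) auto

lemma park_from_Stream: "park_from S (s ## w) (Suc n) = park_from (park_step S s) w n"
  by (induct n) auto

definition park_accepts :: "real set \<Rightarrow> real stream \<Rightarrow> nat \<Rightarrow> bool" where
  "park_accepts S w j \<longleftrightarrow> w !! j \<in> park_free (park_from S w j)"

lemma park_from_Suc_accepts:
  "park_from S w (Suc n) =
     (if park_accepts S w n then insert (w !! n) (park_from S w n) else park_from S w n)"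
  by (simp add: park_accepts_def park_step_eq)

lemma park_from_eq: "park_from S w n = S \<union> {w !! j | j. j < n \<and> park_accepts S w j}"
proof (induct n)
  case (Suc n)
  show ?case
    unfolding park_from_Suc_accepts Suc by (auto simp: less_Suc_eq)
qed simp

lemma park_free_park_from:
  "a \<in> park_free (park_from S w n) \<longleftrightarrow>
     a \<in> park_free S \<and> (\<forall>j\<in>{..<n}. park_accepts S w j \<longrightarrow> 1 \<le> \<bar>w !! j - a\<bar>)"
  unfolding park_from_eq park_free_def by auto

lemma park_accepts_iff:
  "park_accepts S w j \<longleftrightarrow>
     w !! j \<in> park_free S \<and> (\<forall>i\<in>{..<j}. park_accepts S w i \<longrightarrow> 1 \<le> \<bar>w !! i - w !! j\<bar>)"
  using park_free_park_from[of "w !! j" S w j] unfolding park_accepts_def[of S w j] .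

lemma measurable_park_accepts[measurable]:
  "Measurable.pred (stream_space borel) (\<lambda>w. park_accepts S w j)"
proof (induct j rule: less_induct)
  case (less j)
  have [measurable]: "Measurable.pred (stream_space borel)
      (\<lambda>w. \<forall>i\<in>{..<j}. park_accepts S w i \<longrightarrow> 1 \<le> \<bar>w !! i - w !! j\<bar>)"
  proof (rule pred_intros_finite(3)[OF finite_lessThan])
    fix i assume "i \<in> {..<j}"
    then have [measurable]: "Measurable.pred (stream_space borel) (\<lambda>w. park_accepts S w i)"
      using less by simp
    show "Measurable.pred (stream_space borel) (\<lambda>w. park_accepts S w i \<longrightarrow> 1 \<le> \<bar>w !! i - w !! j\<bar>)"
      by measurable
  qed
  show ?case
    by (subst park_accepts_iff) measurable
qed

lemma finite_park_from: "finite S \<Longrightarrow> finite (park_from S w n)"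
  by (induct n) (auto simp: park_step_def)

lemma card_park_from_Suc:
  assumes "finite S"
  shows "card (park_from S w (Suc n)) =
           card (park_from S w n) + (if park_accepts S w n then 1 else 0)"
  using finite_park_from[OF assms, of w n] park_free_not_in[of "w !! n" "park_from S w n"]
  unfolding park_from_Suc_accepts park_accepts_def by (simp del: park_from.simps)

lemma measurable_card_park_from:
  assumes "finite S"
  shows "(\<lambda>w. real (card (park_from S w n))) \<in> borel_measurable (stream_space borel)"
proof (induct n)
  case (Suc n)
  then show ?case
    by (simp add: card_park_from_Suc[OF assms] del: park_from.simps) measurable
qed simp

lemma not_park_saturated_iff:
  assumes "finite T"
  shows "\<not> park_saturated X T \<longleftrightarrow>
           (\<exists>a\<in>insert 0 ((\<lambda>s. s + 1) ` T). 0 \<le> a \<and> a + 1 \<le> X \<and> a \<in> park_free T)"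
proof
  assume "\<not> park_saturated X T"
  then obtain a where a: "0 \<le> a" "a + 1 \<le> X" "a \<in> park_free T"
    unfolding park_saturated_def park_free_def by auto
  \<comment> \<open>slide a to the left until it touches a placed interval or the wall 0\<close>
  define B where "B = insert 0 {s + 1 | s. s \<in> T \<and> s + 1 \<le> a}"
  have "finite B"
    unfolding B_def using assms by auto
  define a' where "a' = Max B"
  have "a' \<in> B"
    unfolding a'_def using \<open>finite B\<close> B_def by (intro Max_in) auto
  have a'_ge: "b \<le> a'" if "b \<in> B" for b
    unfolding a'_def using \<open>finite B\<close> that by simp
  have "a' \<le> a"
    using \<open>a' \<in> B\<close> a(1) unfolding B_def by auto
  have "0 \<le> a'"
    using a'_ge[of 0] unfolding B_def by simp
  have "1 \<le> \<bar>s - a'\<bar>" if "s \<in> T" for s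
  proof (cases "s + 1 \<le> a")
    case True
    then have "s + 1 \<in> B"
      unfolding B_def using that by blast
    then show ?thesis
      using a'_ge[of "s + 1"] by simp
  next
    case False
    have "1 \<le> \<bar>s - a\<bar>"
      using a(3) that unfolding park_free_def by blast
    then show ?thesis
      using False \<open>a' \<le> a\<close> by linarith
  qed
  then have "a' \<in> park_free T"
    unfolding park_free_def by blast
  moreover have "a' \<in> insert 0 ((\<lambda>s. s + 1) ` T)"
    using \<open>a' \<in> B\<close> unfolding B_def by blast
  ultimately show "\<exists>a\<in>insert 0 ((\<lambda>s. s + 1) ` T). 0 \<le> a \<and> a + 1 \<le> X \<and> a \<in> park_free T"
    using \<open>0 \<le> a'\<close> \<open>a' \<le> a\<close> a(2) by force
next
  assume "\<exists>a\<in>insert 0 ((\<lambda>s. s + 1) ` T). 0 \<le> a \<and> a + 1 \<le> X \<and> a \<in> park_free T"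
  then show "\<not> park_saturated X T"
    unfolding park_saturated_def park_free_def by blast
qed

lemma measurable_park_saturated:
  assumes "finite S"
  shows "Measurable.pred (stream_space borel) (\<lambda>w. park_saturated X (park_from S w n))"
proof -
  define fits where "fits w a \<longleftrightarrow> 0 \<le> a \<and> a + 1 \<le> X \<and> a \<in> park_free S \<and>
    (\<forall>j\<in>{..<n}. park_accepts S w j \<longrightarrow> 1 \<le> \<bar>w !! j - a\<bar>)" for w a
  have "park_saturated X (park_from S w n) \<longleftrightarrow>
          \<not> (fits w 0 \<or> (\<exists>s\<in>S. fits w (s + 1)) \<or>
             (\<exists>j\<in>{..<n}. park_accepts S w j \<and> fits w (w !! j + 1)))" for w
    using not_park_saturated_iff[OF finite_park_from[OF assms], of X w n]
    unfolding park_free_park_from fits_def by (auto simp: park_from_eq)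
  moreover have "Measurable.pred (stream_space borel) (\<lambda>w.
          \<not> (fits w 0 \<or> (\<exists>s\<in>S. fits w (s + 1)) \<or>
             (\<exists>j\<in>{..<n}. park_accepts S w j \<and> fits w (w !! j + 1))))"
    unfolding fits_def
    by (intro pred_intros_logic pred_intros_countable_bounded)
      (use assms in \<open>auto intro: countable_finite\<close>)
  ultimately show ?thesis
    by simp
qed

definition park_final :: "real \<Rightarrow> real set \<Rightarrow> real stream \<Rightarrow> real" where
  "park_final X S w =
     (if \<exists>n. park_saturated X (park_from S w n)
      then real (card (park_from S w (LEAST n. park_saturated X (park_from S w n)))) else 0)"

lemma park_count_eq_park_final: "1 < X \<Longrightarrow> park_count X w = park_final X {} w"
  unfolding park_count_def park_final_def by (simp add: park_placed_eq_park_from)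

lemma measurable_park_final:
  assumes "finite S" "sets M = sets borel"
  shows "park_final X S \<in> borel_measurable (stream_space M)"
proof -
  have [measurable]: "Measurable.pred (stream_space borel) (\<lambda>w. park_saturated X (park_from S w n))"
    "(\<lambda>w. real (card (park_from S w n))) \<in> borel_measurable (stream_space borel)" for n
    using measurable_park_saturated measurable_card_park_from assms(1) by auto
  have "(\<lambda>w. real (card (park_from S w (LEAST n. park_saturated X (park_from S w n)))))
          \<in> borel_measurable (stream_space borel)"
    by (rule measurable_compose_countable[where f="\<lambda>n w. real (card (park_from S w n))"]) measurable
  then have "park_final X S \<in> borel_measurable (stream_space borel)"
    unfolding park_final_def[abs_def] by measurable
  then show ?thesis
    unfolding measurable_cong_sets[OF sets_stream_space_cong[OF assms(2)] refl] .
qed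

lemma park_final_saturated:
  assumes "park_saturated X S"
  shows "park_final X S w = real (card S)"
proof -
  have "\<exists>n. park_saturated X (park_from S w n)"
    using assms by (intro exI[of _ 0]) simp
  moreover have "(LEAST n. park_saturated X (park_from S w n)) = 0"
    by (rule Least_eq_0) (simp add: assms)
  ultimately show ?thesis
    unfolding park_final_def by simp
qed

lemma park_final_Stream:
  assumes "0 \<le> s" "s + 1 \<le> X"
  shows "park_final X S (s ## w) = park_final X (park_step S s) w"
proof (cases "park_saturated X S")
  case True
  then have "park_step S s = S"
    using assms unfolding park_saturated_def park_step_eq park_free_def by auto
  then show ?thesis
    using True by (simp add: park_final_saturated)
next
  case False
  let ?P = "\<lambda>n. park_saturated X (park_from S (s ## w) n)"
  let ?Q = "\<lambda>n. park_saturated X (park_from (park_step S s) w n)"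
  have P_Suc: "?P (Suc n) = ?Q n" for n
    by (simp only: park_from_Stream)
  have "\<not> ?P 0"
    using False by simp
  have ex: "(\<exists>n. ?P n) \<longleftrightarrow> (\<exists>n. ?Q n)"
  proof
    assume "\<exists>n. ?P n"
    then obtain n where "?P n"
      by blast
    moreover obtain m where "n = Suc m"
      using \<open>?P n\<close> \<open>\<not> ?P 0\<close> by (cases n) auto
    ultimately show "\<exists>n. ?Q n"
      using P_Suc by auto
  next
    assume "\<exists>n. ?Q n"
    then show "\<exists>n. ?P n"
      using P_Suc by blast
  qed
  show ?thesis
  proof (cases "\<exists>n. ?Q n")
    case True
    then obtain n where "?P n"
      using ex by blast
    then have "(LEAST n. ?P n) = Suc (LEAST n. ?Q n)"
      using Least_Suc[of ?P n] \<open>\<not> ?P 0\<close> P_Suc by simp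
    then show ?thesis
      using ex True unfolding park_final_def by (simp add: park_from_Stream del: park_from.simps)
  next
    case False
    then show ?thesis
      using ex unfolding park_final_def by simp
  qed
qed

definition separated :: "real set \<Rightarrow> bool" where
  "separated F \<longleftrightarrow> (\<forall>x\<in>F. \<forall>y\<in>F. x \<noteq> y \<longrightarrow> 1 \<le> \<bar>x - y\<bar>)"

lemma separated_insert: "separated S \<Longrightarrow> s \<in> park_free S \<Longrightarrow> separated (insert s S)"
  unfolding separated_def park_free_def by (auto simp: abs_minus_commute)

lemma card_separated_le:
  assumes "finite F" "separated F" "F \<subseteq> {a..b}" "a \<le> b"
  shows "real (card F) \<le> b - a + 1"
  using assms
proof (induction "card F" arbitrary: F b rule: less_induct)
  case less
  show ?case
  proof (cases "card F \<le> 1")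
    case True
    then show ?thesis
      using less.prems(4) by linarith
  next
    case False
    define m where "m = Max F"
    have "F \<noteq> {}"
      using False by auto
    then have "m \<in> F" "m \<le> b"
      unfolding m_def using less.prems by auto
    have sub: "F - {m} \<subseteq> {a..m - 1}"
    proof
      fix x assume x: "x \<in> F - {m}"
      then have "x \<le> m" "1 \<le> \<bar>x - m\<bar>"
        using less.prems(1,2) \<open>m \<in> F\<close> unfolding m_def separated_def by auto
      then show "x \<in> {a..m - 1}"
        using x less.prems(3) by auto
    qed
    have card: "card (F - {m}) = card F - 1"
      using \<open>m \<in> F\<close> by simp
    then have "card (F - {m}) \<noteq> 0"
      using False by linarith
    then have "F - {m} \<noteq> {}"
      by (metis card.empty)
    then have "a \<le> m - 1"
      using sub by auto
    have "real (card (F - {m})) \<le> m - 1 - a + 1"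
      by (rule less.hyps) (use False card less.prems sub \<open>a \<le> m - 1\<close> in \<open>auto simp: separated_def\<close>)
    then show ?thesis
      using card False \<open>m \<le> b\<close> by (simp add: of_nat_diff)
  qed
qed

lemma separated_park_from_new: "separated (park_from S w n - S)"
  unfolding separated_def park_from_eq
proof (clarsimp)
  fix i j assume "i < n" "park_accepts S w i" "j < n" "park_accepts S w j" "w !! i \<noteq> w !! j"
  then have "i \<noteq> j"
    by auto
  then have "i < j \<or> j < i"
    by arith
  then show "1 \<le> \<bar>w !! i - w !! j\<bar>"
    using park_accepts_iff[of S w i] park_accepts_iff[of S w j]
      \<open>park_accepts S w i\<close> \<open>park_accepts S w j\<close>
    by (auto simp: abs_minus_commute)
qed

lemma park_final_le:
  assumes "finite S" and w: "\<forall>i. 0 < w !! i \<and> w !! i < X - 1"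
  shows "park_final X S w \<le> real (card S) + X"
proof -
  have "real (card (park_from S w n)) \<le> real (card S) + X" for n
  proof -
    let ?N = "park_from S w n - S"
    have "?N \<subseteq> {0..X - 1}" "X \<ge> 1"
      using w by (auto simp: park_from_eq less_imp_le)
    then have "real (card ?N) \<le> X"
      using card_separated_le[OF _ separated_park_from_new, of S w n 0 "X - 1"]
        finite_park_from[OF assms(1)] by auto
    moreover have "park_from S w n = S \<union> ?N"
      by (auto simp: park_from_eq)
    then have "card (park_from S w n) \<le> card S + card ?N"
      by (metis card_Un_le)
    ultimately show ?thesis
      by linarith
  qed
  moreover have "X \<ge> 1"
    using w[rule_format, of 0] by linarith
  ultimately show ?thesis
    unfolding park_final_def by auto
qed

lemma park_final_nonneg: "0 \<le> park_final X S w"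
  unfolding park_final_def by auto

section \<open>The candidate distribution\<close>

lemma truncated_exp_has_integral:
  fixes c l :: real
  assumes "0 < c" "l \<noteq> 0"
  shows "((\<lambda>t. l * exp (- l * t) / (1 - exp (- l * c))) has_integral 1) {0..c}"
proof -
  define f where "f t = - exp (- l * t) / (1 - exp (- l * c))" for t
  have "((\<lambda>t. l * exp (- l * t) / (1 - exp (- l * c))) has_integral (f c - f 0)) {0..c}"
  proof (rule fundamental_theorem_of_calculus)
    fix x :: real
    have "(f has_real_derivative l * exp (- l * x) / (1 - exp (- l * c))) (at x within {0..c})"
      unfolding f_def using assms by (auto intro!: derivative_eq_intros)
    then show "(f has_vector_derivative l * exp (- l * x) / (1 - exp (- l * c)))
        (at x within {0..c})"
      using has_real_derivative_iff_has_vector_derivative by blast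
  qed (use assms in simp)
  moreover have "exp (- l * c) \<noteq> 1"
    using assms by simp
  then have "f c - f 0 = 1"
    unfolding f_def by (simp add: field_simps)
  ultimately show ?thesis
    by simp
qed

lemma measurable_park_dens[measurable]: "park_dens l X \<in> borel_measurable borel"
  unfolding park_dens_def by measurable

lemma park_dens_nonneg: "0 < l \<Longrightarrow> 0 \<le> park_dens l X t"
  unfolding park_dens_def by (auto intro!: divide_nonneg_pos simp: mult_less_0_iff)

lemma park_dens_eq_0: "\<not> (0 < t \<and> t < X - 1) \<Longrightarrow> park_dens l X t = 0"
  unfolding park_dens_def by auto

lemma park_dens_has_integral:
  assumes "1 < X" "l \<noteq> 0"
  shows "(park_dens l X has_integral 1) UNIV"
proof -
  have "((\<lambda>t. if t \<in> {0..X - 1} then l * exp (- l * t) / (1 - exp (- l * (X - 1))) else 0)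
          has_integral 1) UNIV"
    using truncated_exp_has_integral[of "X - 1" l] assms by (subst has_integral_restrict_UNIV) simp
  then show ?thesis
    by (rule has_integral_spike_finite[where S="{0, X - 1}", rotated 2]) (auto simp: park_dens_def)
qed

lemma sets_park_cand[simp, measurable_cong]: "sets (park_cand l X) = sets borel"
  unfolding park_cand_def by simp

lemma space_park_cand[simp]: "space (park_cand l X) = UNIV"
  unfolding park_cand_def by simp

lemma prob_space_park_cand:
  assumes "1 < X" "0 < l"
  shows "prob_space (park_cand l X)"
proof
  have "(\<integral>\<^sup>+ t. ennreal (park_dens l X t) \<partial>lborel) = 1"
    using nn_integral_has_integral_lborel[OF measurable_park_dens park_dens_nonneg
        park_dens_has_integral] assms
    by simp
  then show "emeasure (park_cand l X) (space (park_cand l X)) = 1"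
    unfolding park_cand_def by (simp add: emeasure_density)
qed

lemma park_cand_null: "X \<le> 1 \<Longrightarrow> park_cand l X = null_measure lborel"
  unfolding park_cand_def null_measure_eq_density by (simp add: park_dens_eq_0)

lemma AE_park_cand: "AE t in park_cand l X. 0 < t \<and> t < X - 1"
  unfolding park_cand_def by (subst AE_density) (auto simp: park_dens_def)

lemma AE_park_cand_not_in:
  assumes "countable A"
  shows "AE t in park_cand l X. t \<notin> A"
  unfolding park_cand_def
  by (subst AE_density)
    (auto intro: eventually_mono[OF AE_not_in[OF countable_imp_null_set_lborel[OF assms]]])

lemma AE_stream_park_cand:
  assumes "1 < X" "0 < l"
  shows "AE w in stream_space (park_cand l X). \<forall>i. 0 < w !! i \<and> w !! i < X - 1"
proof -
  interpret prob_space "park_cand l X"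
    using prob_space_park_cand assms by auto
  have "AE w in stream_space (park_cand l X). stream_all (\<lambda>t. 0 < t \<and> t < X - 1) w"
    by (rule AE_stream_all[OF _ AE_park_cand]) measurable
  then show ?thesis
    by (auto elim!: eventually_mono simp: stream_all_def sset_range)
qed

section \<open>Expected number of intervals at saturation\<close>

text \<open>For X \<le> 1 no candidate fits into (0,X), so every configuration is final.\<close>

definition park_mean :: "real \<Rightarrow> real \<Rightarrow> real set \<Rightarrow> ennreal" where
  "park_mean l X S =
     (if X \<le> 1 then ennreal (real (card S))
      else \<integral>\<^sup>+ w. ennreal (park_final X S w) \<partial>stream_space (park_cand l X))"

definition park_mean_given :: "real \<Rightarrow> real \<Rightarrow> real set \<Rightarrow> real \<Rightarrow> ennreal" where
  "park_mean_given l X S s =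
     (\<integral>\<^sup>+ w. ennreal (park_final X S (s ## w)) \<partial>stream_space (park_cand l X))"

lemma park_mean_finite:
  assumes "finite S" "0 < l"
  shows "park_mean l X S < \<infinity>"
proof (cases "X \<le> 1")
  case False
  interpret prob_space "stream_space (park_cand l X)"
    using prob_space.prob_space_stream_space[OF prob_space_park_cand] False assms by auto
  have "AE w in stream_space (park_cand l X).
      ennreal (park_final X S w) \<le> ennreal (real (card S) + X)"
    using AE_stream_park_cand[of X l] False assms
    by (auto elim!: eventually_mono intro!: ennreal_leI park_final_le simp del: ennreal_plus)
  then have "(\<integral>\<^sup>+ w. ennreal (park_final X S w) \<partial>stream_space (park_cand l X))
      \<le> (\<integral>\<^sup>+ w. ennreal (real (card S) + X) \<partial>stream_space (park_cand l X))"
    by (rule nn_integral_mono_AE)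
  also have "\<dots> = ennreal (real (card S) + X)"
    by (simp only: nn_integral_const emeasure_space_1 mult_1_right)
  finally have "(\<integral>\<^sup>+ w. ennreal (park_final X S w) \<partial>stream_space (park_cand l X)) < \<infinity>"
    using le_less_trans by fastforce
  then show ?thesis
    using False by (simp add: park_mean_def)
qed (simp add: park_mean_def)

lemma measurable_park_mean_given:
  assumes "finite S" "1 < X" "0 < l"
  shows "park_mean_given l X S \<in> borel_measurable borel"
proof -
  interpret prob_space "stream_space (park_cand l X)"
    using prob_space.prob_space_stream_space[OF prob_space_park_cand[OF assms(2,3)]] .
  have "(\<lambda>p. fst p ## snd p) \<in> (borel \<Otimes>\<^sub>M stream_space (park_cand l X)) \<rightarrow>\<^sub>M stream_space borel"
    by (intro measurable_Stream measurable_fst'' measurable_snd'')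
      (auto simp: measurable_cong_sets[OF sets_stream_space_cong[OF sets_park_cand] refl])
  then have "(\<lambda>p. ennreal (park_final X S (fst p ## snd p)))
               \<in> borel_measurable (borel \<Otimes>\<^sub>M stream_space (park_cand l X))"
    using measurable_park_final[OF assms(1), of borel X] by measurable
  from borel_measurable_nn_integral_fst[OF this] show ?thesis
    unfolding park_mean_given_def[abs_def] by simp
qed

lemma park_mean_eq_nn_integral:
  assumes "finite S" "1 < X" "0 < l"
  shows "park_mean l X S = (\<integral>\<^sup>+ s. park_mean_given l X S s \<partial>park_cand l X)"
proof -
  interpret prob_space "park_cand l X"
    using prob_space_park_cand[OF assms(2,3)] .
  have "(\<lambda>w. ennreal (park_final X S w)) \<in> borel_measurable (stream_space (park_cand l X))"
    using measurable_park_final[OF assms(1), of "park_cand l X" X] by simp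
  from nn_integral_stream_space[OF this] show ?thesis
    unfolding park_mean_def park_mean_given_def using assms(2) by simp
qed

lemma park_mean_given_eq:
  assumes "0 < s" "s < X - 1"
  shows "park_mean_given l X S s = park_mean l X (park_step S s)"
  unfolding park_mean_given_def park_mean_def using assms by (simp add: park_final_Stream)

lemma park_mean_saturated:
  assumes "park_saturated X S" "0 < l"
  shows "park_mean l X S = ennreal (real (card S))"
proof (cases "X \<le> 1")
  case False
  interpret prob_space "stream_space (park_cand l X)"
    using prob_space.prob_space_stream_space[OF prob_space_park_cand] False assms by auto
  show ?thesis
    unfolding park_mean_def using False assms by (simp add: park_final_saturated emeasure_space_1)
qed (simp add: park_mean_def)

lemma park_mean_rec:
  assumes "finite S" "0 < l"
  shows "emeasure (park_cand l X) (park_free S) * park_mean l X S =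
           (\<integral>\<^sup>+s\<in>park_free S. park_mean_given l X S s \<partial>park_cand l X)"
proof (cases "X \<le> 1")
  case True
  then show ?thesis
    by (simp add: park_cand_null)
next
  case False
  interpret prob_space "park_cand l X"
    using prob_space_park_cand False assms by auto
  let ?F = "park_free S" and ?m = "park_mean l X S" and ?g = "park_mean_given l X S"
  have [measurable]: "?g \<in> borel_measurable borel" "- ?F \<in> sets borel"
    using measurable_park_mean_given assms False by (auto intro: borel_comp)
  \<comment> \<open>a rejected first candidate leaves the configuration unchanged\<close>
  have "?m = (\<integral>\<^sup>+ s. ?g s \<partial>park_cand l X)"
    using park_mean_eq_nn_integral assms False by auto
  also have "\<dots> = (\<integral>\<^sup>+ s. ?g s * indicator ?F s + ?m * indicator (- ?F) s \<partial>park_cand l X)"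
    by (rule nn_integral_cong_AE, rule eventually_mono[OF AE_park_cand])
      (auto simp: park_mean_given_eq park_step_eq indicator_def)
  also have "\<dots> = (\<integral>\<^sup>+s\<in>?F. ?g s \<partial>park_cand l X) + ?m * emeasure (park_cand l X) (- ?F)"
    by (simp add: nn_integral_add nn_integral_cmult_indicator)
  finally have m_eq: "?m = (\<integral>\<^sup>+s\<in>?F. ?g s \<partial>park_cand l X) + ?m * emeasure (park_cand l X) (- ?F)" .
  have "emeasure (park_cand l X) ?F + emeasure (park_cand l X) (- ?F) = 1"
    using plus_emeasure[of ?F "park_cand l X" "- ?F"] emeasure_space_1 by simp
  then have "?m = ?m * emeasure (park_cand l X) (- ?F) + emeasure (park_cand l X) ?F * ?m"
    by (metis add.commute distrib_left mult.commute mult_1_right)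
  moreover have "?m * emeasure (park_cand l X) (- ?F) \<noteq> \<infinity>"
    using park_mean_finite[OF assms, of X] emeasure_finite[of "- ?F"]
    by (simp add: ennreal_mult_eq_top_iff)
  ultimately show ?thesis
    using m_eq by (metis add.commute ennreal_add_left_cancel)
qed

lemma park_mean_rec_offset:
  assumes "finite S" "0 < l"
    and "AE s in park_cand l X. s \<in> park_free S \<longrightarrow> h s = c + park_mean_given l X S s"
  shows "(\<integral>\<^sup>+s\<in>park_free S. h s \<partial>park_cand l X) =
           emeasure (park_cand l X) (park_free S) * (c + park_mean l X S)"
proof (cases "X \<le> 1")
  case True
  then show ?thesis
    by (simp add: park_cand_null)
next
  case False
  let ?F = "park_free S" and ?g = "park_mean_given l X S"
  have [measurable]: "?g \<in> borel_measurable borel"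
    using measurable_park_mean_given assms False by auto
  have "(\<integral>\<^sup>+s\<in>?F. h s \<partial>park_cand l X) =
          (\<integral>\<^sup>+ s. c * indicator ?F s + ?g s * indicator ?F s \<partial>park_cand l X)"
    by (rule nn_integral_cong_AE, rule eventually_mono[OF assms(3)])
      (auto simp: indicator_def distrib_right)
  also have "\<dots> = c * emeasure (park_cand l X) ?F + emeasure (park_cand l X) ?F * park_mean l X S"
    by (simp add: nn_integral_add nn_integral_cmult_indicator park_mean_rec[OF assms(1,2)])
  finally show ?thesis
    by (simp add: algebra_simps)
qed

text \<open>
  The walls of (0,X) act like placed left endpoints -1 and X. A free position without a
  free neighbourhood is squeezed between two such points at distance exactly 2; this
  degenerate, measure-zero situation is what the following condition excludes.
\<close>

definition no_tight_slot :: "real \<Rightarrow> real set \<Rightarrow> bool" where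
  "no_tight_slot X S \<longleftrightarrow> (\<forall>u\<in>insert (-1) (insert X S). \<forall>v\<in>insert (-1) (insert X S). v - u \<noteq> 2)"

lemma no_tight_slot_shift_subset:
  assumes "no_tight_slot X S" "insert (-1) (insert Y T) \<subseteq> (\<lambda>u. u + c) ` insert (-1) (insert X S)"
  shows "no_tight_slot Y T"
  unfolding no_tight_slot_def
proof (intro ballI)
  fix u v assume "u \<in> insert (-1) (insert Y T)" "v \<in> insert (-1) (insert Y T)"
  then obtain u' v' where "u' \<in> insert (-1) (insert X S)" "u = u' + c"
    "v' \<in> insert (-1) (insert X S)" "v = v' + c"
    using assms(2) by blast
  then show "v - u \<noteq> 2"
    using assms(1) unfolding no_tight_slot_def by auto
qed

lemma AE_no_tight_slot_insert:
  assumes "finite S" "no_tight_slot X S"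
  shows "AE u in park_cand l Y. no_tight_slot X (insert (u + c) S)"
proof -
  let ?B = "insert (-1) (insert X S)"
  have "countable ((\<lambda>v. v + 2 - c) ` ?B \<union> (\<lambda>v. v - 2 - c) ` ?B)"
    using assms(1) by (intro countable_finite) auto
  then show ?thesis
    by (rule eventually_mono[OF AE_park_cand_not_in])
      (use assms(2) in \<open>auto simp: no_tight_slot_def algebra_simps\<close>)
qed

lemma interval_free_if_not_saturated:
  assumes "finite S" "no_tight_slot X S" "\<not> park_saturated X S"
  obtains a b where "a < b" "0 \<le> a" "b \<le> X - 1" "{a<..<b} \<subseteq> park_free S"
proof -
  obtain a where a: "a \<in> insert 0 ((\<lambda>s. s + 1) ` S)" "0 \<le> a" "a + 1 \<le> X" "a \<in> park_free S"
    using not_park_saturated_iff[OF assms(1)] assms(3) by blast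
  have left: "a - 1 \<in> insert (-1) (insert X S)"
    using a(1) by auto
  have "X - (a - 1) \<noteq> 2"
    using assms(2) left unfolding no_tight_slot_def by blast
  then have "a < X - 1"
    using a(3) by simp
  have "s \<noteq> a + 1" if "s \<in> S" for s
    using assms(2) left that unfolding no_tight_slot_def by force
  \<comment> \<open>distance from a to the next obstacle on its right\<close>
  define D where "D = insert (X - 1 - a) ((\<lambda>s. s - a - 1) ` {s\<in>S. s > a})"
  have "finite D"
    unfolding D_def using assms(1) by auto
  have D_pos: "0 < d" if "d \<in> D" for d
    using that \<open>a < X - 1\<close> a(4) \<open>\<And>s. s \<in> S \<Longrightarrow> s \<noteq> a + 1\<close>
    unfolding D_def park_free_def by force
  define \<delta> where "\<delta> = Min D"
  have "\<delta> \<in> D"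
    unfolding \<delta>_def using \<open>finite D\<close> D_def by (intro Min_in) auto
  have \<delta>_le: "\<delta> \<le> d" if "d \<in> D" for d
    unfolding \<delta>_def using \<open>finite D\<close> that by simp
  have "{a<..<a + \<delta>} \<subseteq> park_free S"
  proof
    fix y assume y: "y \<in> {a<..<a + \<delta>}"
    have "1 \<le> \<bar>s - y\<bar>" if "s \<in> S" for s
    proof (cases "s > a")
      case True
      then have "\<delta> \<le> s - a - 1"
        using \<delta>_le[of "s - a - 1"] that unfolding D_def by auto
      then show ?thesis
        using y by auto
    next
      case False
      then have "s \<le> a - 1"
        using a(4) that unfolding park_free_def by force
      then show ?thesis
        using y by auto
    qed
    then show "y \<in> park_free S"
      unfolding park_free_def by blast
  qed
  moreover have "\<delta> \<le> X - 1 - a"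
    using \<delta>_le[of "X - 1 - a"] unfolding D_def by auto
  ultimately show ?thesis
    using that[of a "a + \<delta>"] a(2) D_pos[OF \<open>\<delta> \<in> D\<close>] by auto
qed

lemma emeasure_park_cand_interval_pos:
  assumes "0 < l" "1 < X" "a < b" "0 \<le> a" "b \<le> X - 1"
  shows "0 < emeasure (park_cand l X) {a<..<b}"
proof -
  define m where "m = l * exp (- l * (X - 1)) / (1 - exp (- l * (X - 1)))"
  have "exp (- l * (X - 1)) < 1"
    using assms by simp
  then have "0 < m"
    unfolding m_def using assms by (intro divide_pos_pos) auto
  have "ennreal m * indicator {a<..<b} s \<le> ennreal (park_dens l X s) * indicator {a<..<b} s" for s
  proof (cases "s \<in> {a<..<b}")
    case True
    then have "exp (- l * (X - 1)) \<le> exp (- l * s)"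
      using assms by simp
    then have "m \<le> park_dens l X s"
      unfolding m_def park_dens_def using True assms \<open>exp (- l * (X - 1)) < 1\<close>
      by (auto intro!: divide_right_mono mult_left_mono)
    then show ?thesis
      using True by (auto intro: ennreal_leI)
  qed simp
  then have "(\<integral>\<^sup>+ s. ennreal m * indicator {a<..<b} s \<partial>lborel) \<le> emeasure (park_cand l X) {a<..<b}"
    unfolding park_cand_def by (simp add: emeasure_density nn_integral_mono)
  moreover have "(\<integral>\<^sup>+ s. ennreal m * indicator {a<..<b} s \<partial>lborel) = ennreal m * ennreal (b - a)"
    using assms by (simp add: nn_integral_cmult_indicator)
  moreover have "0 < ennreal m * ennreal (b - a)"
    using \<open>0 < m\<close> assms by (simp add: ennreal_mult[symmetric])
  ultimately show ?thesis
    by order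
qed

lemma park_mean_eq_card:
  assumes "finite S" "0 < l" "no_tight_slot X S"
    and "emeasure (park_cand l X) (park_free S) = 0"
  shows "park_mean l X S = ennreal (real (card S))"
proof (cases "X \<le> 1")
  case True
  then show ?thesis
    by (simp add: park_mean_def)
next
  case False
  have "park_saturated X S"
  proof (rule ccontr)
    assume "\<not> park_saturated X S"
    then obtain a b where "a < b" "0 \<le> a" "b \<le> X - 1" "{a<..<b} \<subseteq> park_free S"
      using interval_free_if_not_saturated assms(1,3) by blast
    then have "0 < emeasure (park_cand l X) {a<..<b}"
      using emeasure_park_cand_interval_pos assms(2) False by simp
    also have "\<dots> \<le> emeasure (park_cand l X) (park_free S)"
      by (rule emeasure_mono[OF \<open>{a<..<b} \<subseteq> park_free S\<close>]) measurable
    finally have "0 < emeasure (park_cand l X) (park_free S)" .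
    then show False
      using assms(4) by simp
  qed
  then show ?thesis
    using park_mean_saturated assms(2) by blast
qed

section \<open>Splitting at a placed interval\<close>

definition park_glue :: "real \<Rightarrow> real set \<Rightarrow> real set \<Rightarrow> real set" where
  "park_glue t L R = insert t (L \<union> (\<lambda>u. u + (t + 1)) ` R)"

definition park_dens_ratio :: "real \<Rightarrow> real \<Rightarrow> real \<Rightarrow> real" where
  "park_dens_ratio l X Y = (1 - exp (- l * (Y - 1))) / (1 - exp (- l * (X - 1)))"

lemma park_dens_ratio_pos: "0 < l \<Longrightarrow> 1 < Y \<Longrightarrow> 1 < X \<Longrightarrow> 0 < park_dens_ratio l X Y"
  unfolding park_dens_ratio_def by (simp add: divide_pos_pos)

text \<open>Memorylessness of the truncated exponential law.\<close>

lemma park_dens_restrict: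
  assumes "0 < l" "s < Y - 1" "Y \<le> X"
  shows "park_dens l X s = park_dens_ratio l X Y * park_dens l Y s"
proof (cases "0 < s")
  case True
  have "1 - exp (- l * (Y - 1)) \<noteq> 0"
    using True assms by simp
  moreover have "a \<noteq> 0 \<Longrightarrow> a / b * (c / a) = c / b" for a b c :: real
    by simp
  ultimately show ?thesis
    using True assms unfolding park_dens_def park_dens_ratio_def by simp
qed (simp add: park_dens_eq_0)

lemma park_dens_shift:
  assumes "0 < l" "0 \<le> c" "0 < u" "u < Y - 1"
  shows "park_dens l (Y + c) (u + c) =
           exp (- l * c) * park_dens_ratio l (Y + c) Y * park_dens l Y u"
proof -
  have "1 - exp (- l * (Y - 1)) \<noteq> 0"
    using assms by simp
  moreover have "a \<noteq> 0 \<Longrightarrow> E * (a / b) * (l * F / a) = l * (E * F) / b" for a b E F :: real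
    by simp
  moreover have "exp (- l * (u + c)) = exp (- l * c) * exp (- l * u)"
    by (simp add: algebra_simps flip: exp_add)
  ultimately show ?thesis
    using assms unfolding park_dens_def park_dens_ratio_def by simp
qed

lemma park_free_glue_left:
  "L \<subseteq> {..t - 1} \<Longrightarrow> R \<subseteq> {0..} \<Longrightarrow> s < t - 1 \<Longrightarrow>
     s \<in> park_free (park_glue t L R) \<longleftrightarrow> s \<in> park_free L"
  unfolding park_free_def park_glue_def by force

lemma park_free_glue_right:
  assumes "L \<subseteq> {..t - 1}" "R \<subseteq> {0..}" "0 \<le> u"
  shows "u + (t + 1) \<in> park_free (park_glue t L R) \<longleftrightarrow> u \<in> park_free R"
proof
  assume free: "u + (t + 1) \<in> park_free (park_glue t L R)"
  have "1 \<le> \<bar>v - u\<bar>" if "v \<in> R" for v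
  proof -
    have "v + (t + 1) \<in> park_glue t L R"
      unfolding park_glue_def using that by blast
    then show ?thesis
      using free unfolding park_free_def by force
  qed
  then show "u \<in> park_free R"
    unfolding park_free_def by blast
next
  assume free: "u \<in> park_free R"
  have "1 \<le> \<bar>s - (u + (t + 1))\<bar>" if s: "s \<in> park_glue t L R" for s
  proof -
    consider "s = t" | "s \<in> L" | v where "v \<in> R" "s = v + (t + 1)"
      using s unfolding park_glue_def by blast
    then show ?thesis
    proof cases
      case 3
      then show ?thesis
        using free unfolding park_free_def by force
    qed (use assms in auto)
  qed
  then show "u + (t + 1) \<in> park_free (park_glue t L R)"
    unfolding park_free_def by blast
qed

lemma park_free_glue_mid: "t - 1 < s \<Longrightarrow> s < t + 1 \<Longrightarrow> s \<notin> park_free (park_glue t L R)"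
  unfolding park_free_def park_glue_def by auto

lemma park_dens_indicator_glue:
  assumes "0 < l" "0 < t" "t < X - 1" "L \<subseteq> {..t - 1}" "R \<subseteq> {0..}" "s \<noteq> t - 1" "s \<noteq> t + 1"
  shows "ennreal (park_dens l X s) * indicator (park_free (park_glue t L R)) s =
           ennreal (park_dens_ratio l X t) *
             (ennreal (park_dens l t s) * indicator (park_free L) s) +
           ennreal (exp (- l * (t + 1)) * park_dens_ratio l X (X - 1 - t)) *
             (ennreal (park_dens l (X - 1 - t) (s - (t + 1))) *
              indicator (park_free R) (s - (t + 1)))"
    (is "_ = ennreal ?cL * ?dL + ennreal ?cR * ?dR")
proof -
  let ?r = "X - 1 - t"
  have "s < t - 1 \<or> (t - 1 < s \<and> s < t + 1) \<or> t + 1 < s"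
    using assms(6,7) by auto
  then consider "s < t - 1" | "t - 1 < s \<and> s < t + 1" | "t + 1 < s"
    by blast
  then show ?thesis
  proof cases
    case 1
    then have "park_dens l ?r (s - (t + 1)) = 0"
      by (simp add: park_dens_eq_0)
    then show ?thesis
      using park_dens_restrict[of l s t X] park_free_glue_left[OF assms(4,5) 1] assms(1-3) 1
        park_dens_nonneg[OF assms(1), of t s]
      by (simp add: indicator_def ennreal_mult'')
  next
    case 2
    then have "park_dens l t s = 0" "park_dens l ?r (s - (t + 1)) = 0"
      by (simp_all add: park_dens_eq_0)
    then show ?thesis
      using park_free_glue_mid[of t s L R] 2 by simp
  next
    case 3
    have "park_dens l t s = 0"
      using 3 by (simp add: park_dens_eq_0)
    moreover have "s \<in> park_free (park_glue t L R) \<longleftrightarrow> s - (t + 1) \<in> park_free R"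
      using park_free_glue_right[OF assms(4,5), of "s - (t + 1)"] 3 by simp
    moreover have "park_dens l X s = ?cR * park_dens l ?r (s - (t + 1))"
    proof (cases "s < X - 1")
      case True
      then show ?thesis
        using park_dens_shift[OF assms(1), of "t + 1" "s - (t + 1)" ?r] 3 assms(2) by simp
    qed (simp add: park_dens_eq_0)
    ultimately show ?thesis
      using park_dens_nonneg[OF assms(1), of ?r "s - (t + 1)"]
      by (simp add: indicator_def ennreal_mult'')
  qed
qed

lemma set_nn_integral_park_cand_glue:
  fixes g :: "real \<Rightarrow> ennreal"
  assumes "0 < l" "0 < t" "t < X - 1" "L \<subseteq> {..t - 1}" "R \<subseteq> {0..}"
    and [measurable]: "g \<in> borel_measurable borel"
  shows "(\<integral>\<^sup>+s\<in>park_free (park_glue t L R). g s \<partial>park_cand l X) =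
           ennreal (park_dens_ratio l X t) * (\<integral>\<^sup>+s\<in>park_free L. g s \<partial>park_cand l t) +
           ennreal (exp (- l * (t + 1)) * park_dens_ratio l X (X - 1 - t)) *
             (\<integral>\<^sup>+u\<in>park_free R. g (u + (t + 1)) \<partial>park_cand l (X - 1 - t))"
proof -
  let ?cL = "park_dens_ratio l X t"
  let ?cR = "exp (- l * (t + 1)) * park_dens_ratio l X (X - 1 - t)"
  let ?dL = "\<lambda>s. ennreal (park_dens l t s) * indicator (park_free L) s"
  let ?dR = "\<lambda>u. ennreal (park_dens l (X - 1 - t) u) * indicator (park_free R) u"
  have "AE s in lborel. s \<notin> {t - 1, t + 1}"
    by (intro AE_not_in countable_imp_null_set_lborel) auto
  then have "(\<integral>\<^sup>+ s. ennreal (park_dens l X s) * indicator (park_free (park_glue t L R)) s * g s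
        \<partial>lborel) =
      (\<integral>\<^sup>+ s. ennreal ?cL * (?dL s * g s) + ennreal ?cR * (?dR (s - (t + 1)) * g s) \<partial>lborel)"
    by (rule nn_integral_cong_AE[OF eventually_mono])
      (simp add: park_dens_indicator_glue[OF assms(1-5)] distrib_right mult.assoc)
  also have "\<dots> = ennreal ?cL * (\<integral>\<^sup>+ s. ?dL s * g s \<partial>lborel) +
      ennreal ?cR * (\<integral>\<^sup>+ s. ?dR (s - (t + 1)) * g s \<partial>lborel)"
    by (simp add: nn_integral_add nn_integral_cmult)
  also have "(\<integral>\<^sup>+ s. ?dR (s - (t + 1)) * g s \<partial>lborel) = (\<integral>\<^sup>+ u. ?dR u * g (u + (t + 1)) \<partial>lborel)"
    using nn_integral_real_affine[of "\<lambda>u. ?dR u * g (u + (t + 1))" 1 "- (t + 1)"]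
    by (simp add: algebra_simps)
  finally show ?thesis
    unfolding park_cand_def by (simp add: nn_integral_density ac_simps)
qed

lemma emeasure_park_cand_glue:
  assumes "0 < l" "0 < t" "t < X - 1" "L \<subseteq> {..t - 1}" "R \<subseteq> {0..}"
  shows "emeasure (park_cand l X) (park_free (park_glue t L R)) =
           ennreal (park_dens_ratio l X t) * emeasure (park_cand l t) (park_free L) +
           ennreal (exp (- l * (t + 1)) * park_dens_ratio l X (X - 1 - t)) *
             emeasure (park_cand l (X - 1 - t)) (park_free R)"
  using set_nn_integral_park_cand_glue[OF assms, of "\<lambda>_. 1"] by simp

lemma finite_park_glue[simp]: "finite L \<Longrightarrow> finite R \<Longrightarrow> finite (park_glue t L R)"
  unfolding park_glue_def by simp

lemma card_park_glue:
  assumes "finite L" "finite R" "L \<subseteq> {..t - 1}" "R \<subseteq> {0..}"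
  shows "card (park_glue t L R) = Suc (card L + card R)"
proof -
  have "card ((\<lambda>u. u + (t + 1)) ` R) = card R"
    by (rule card_image) (simp add: inj_on_def)
  moreover have "t \<notin> L \<union> (\<lambda>u. u + (t + 1)) ` R" "L \<inter> (\<lambda>u. u + (t + 1)) ` R = {}"
    using assms by force+
  ultimately show ?thesis
    unfolding park_glue_def using assms by (simp add: card_Un_disjoint)
qed

lemma park_glue_subset:
  "0 < t \<Longrightarrow> t < X - 1 \<Longrightarrow> L \<subseteq> {0..t - 1} \<Longrightarrow> R \<subseteq> {0..X - 1 - t - 1} \<Longrightarrow>
     park_glue t L R \<subseteq> {0..X - 1}"
  unfolding park_glue_def by auto

lemma insert_park_glue_left: "insert s (park_glue t L R) = park_glue t (insert s L) R"
  unfolding park_glue_def by auto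

lemma insert_park_glue_right: "insert (u + (t + 1)) (park_glue t L R) = park_glue t L (insert u R)"
  unfolding park_glue_def by auto

lemma no_tight_slot_glue_left: "no_tight_slot X (park_glue t L R) \<Longrightarrow> no_tight_slot t L"
  by (rule no_tight_slot_shift_subset[where c = 0]) (auto simp: park_glue_def)

lemma no_tight_slot_glue_right: "no_tight_slot X (park_glue t L R) \<Longrightarrow> no_tight_slot (X - 1 - t) R"
proof (rule no_tight_slot_shift_subset[where c = "- (t + 1)"])
  show "insert (- 1) (insert (X - 1 - t) R) \<subseteq>
          (\<lambda>u. u + - (t + 1)) ` insert (- 1) (insert X (park_glue t L R))"
  proof
    fix u assume "u \<in> insert (- 1) (insert (X - 1 - t) R)"
    then consider "u = - 1" | "u = X - 1 - t" | "u \<in> R"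
      by auto
    then show "u \<in> (\<lambda>u. u + - (t + 1)) ` insert (- 1) (insert X (park_glue t L R))"
    proof cases
      case 1
      then show ?thesis by (intro image_eqI[of _ _ t]) (auto simp: park_glue_def)
    next
      case 2
      then show ?thesis by (intro image_eqI[of _ _ X]) auto
    next
      case 3
      then show ?thesis by (intro image_eqI[of _ _ "u + (t + 1)"]) (auto simp: park_glue_def)
    qed
  qed
qed

lemma park_mean_glue_null:
  assumes "0 < l" "0 < t" "t < X - 1" "finite L" "L \<subseteq> {..t - 1}" "finite R" "R \<subseteq> {0..}"
    and "no_tight_slot X (park_glue t L R)"
    and "emeasure (park_cand l X) (park_free (park_glue t L R)) = 0"
  shows "park_mean l X (park_glue t L R) = 1 + park_mean l t L + park_mean l (X - 1 - t) R"
proof -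
  have sum_0: "ennreal (park_dens_ratio l X t) * emeasure (park_cand l t) (park_free L) +
      ennreal (exp (- l * (t + 1)) * park_dens_ratio l X (X - 1 - t)) *
        emeasure (park_cand l (X - 1 - t)) (park_free R) = 0"
    using emeasure_park_cand_glue[OF assms(1-3,5,7)] assms(9) by simp
  have "emeasure (park_cand l t) (park_free L) = 0"
  proof (cases "t \<le> 1")
    case False
    then show ?thesis
      using sum_0 park_dens_ratio_pos[of l t X] assms(1,3) by simp
  qed (simp add: park_cand_null)
  then have L: "park_mean l t L = ennreal (real (card L))"
    using park_mean_eq_card assms(1,4) no_tight_slot_glue_left[OF assms(8)] by blast
  have "emeasure (park_cand l (X - 1 - t)) (park_free R) = 0"
  proof (cases "X - 1 - t \<le> 1")
    case False
    then have "0 < park_dens_ratio l X (X - 1 - t)"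
      using park_dens_ratio_pos[of l "X - 1 - t" X] assms(1-3) by simp
    then show ?thesis
      using sum_0 by simp
  qed (simp add: park_cand_null)
  then have R: "park_mean l (X - 1 - t) R = ennreal (real (card R))"
    using park_mean_eq_card assms(1,6) no_tight_slot_glue_right[OF assms(8)] by blast
  have "park_mean l X (park_glue t L R) = ennreal (real (card (park_glue t L R)))"
    using park_mean_eq_card assms(1,4,6,8,9) by (simp add: park_glue_def)
  then show ?thesis
    unfolding L R card_park_glue[OF assms(4,6,5,7)] by (simp add: ennreal_plus add.assoc)
qed

context
  fixes l t X :: real and L R :: "real set"
  assumes pos: "0 < l" "0 < t" "t < X - 1"
    and L: "finite L" "L \<subseteq> {0..t - 1}" and R: "finite R" "R \<subseteq> {0..X - 1 - t - 1}"
    and tight: "no_tight_slot X (park_glue t L R)"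
    and extend: "\<And>s L' R'. park_glue t L' R' = insert s (park_glue t L R) \<Longrightarrow>
      s \<in> park_free (park_glue t L R) \<Longrightarrow> no_tight_slot X (park_glue t L' R') \<Longrightarrow>
      finite L' \<Longrightarrow> L' \<subseteq> {0..t - 1} \<Longrightarrow> finite R' \<Longrightarrow> R' \<subseteq> {0..X - 1 - t - 1} \<Longrightarrow>
      park_mean l X (park_glue t L' R') = 1 + park_mean l t L' + park_mean l (X - 1 - t) R'"
begin

lemma AE_park_mean_given_glue_left:
  "AE s in park_cand l t. s \<in> park_free L \<longrightarrow>
     park_mean_given l X (park_glue t L R) s =
       (1 + park_mean l (X - 1 - t) R) + park_mean_given l t L s"
  using AE_park_cand[where l = l and X = t]
    AE_no_tight_slot_insert[OF finite_park_glue[OF L(1) R(1)] tight,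
      where l = l and Y = t and c = 0]
proof eventually_elim
  case (elim s)
  show ?case
  proof
    assume sL: "s \<in> park_free L"
    moreover have "L \<subseteq> {..t - 1}" "R \<subseteq> {0..}"
      using L(2) R(2) by auto
    ultimately have sS: "s \<in> park_free (park_glue t L R)"
      using park_free_glue_left[of L t R s] elim(1) by simp
    have glue: "park_glue t (insert s L) R = insert s (park_glue t L R)"
      by (simp add: insert_park_glue_left)
    have "park_mean_given l X (park_glue t L R) s = park_mean l X (insert s (park_glue t L R))"
      using park_mean_given_eq elim(1) pos(3) sS by (simp add: park_step_eq)
    also have "\<dots> = 1 + park_mean l t (insert s L) + park_mean l (X - 1 - t) R"
      unfolding glue[symmetric] by (rule extend[OF glue sS]) (use elim L R in \<open>auto simp: glue\<close>)
    also have "park_mean l t (insert s L) = park_mean_given l t L s"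
      using park_mean_given_eq elim(1) sL by (simp add: park_step_eq)
    finally show "park_mean_given l X (park_glue t L R) s =
        (1 + park_mean l (X - 1 - t) R) + park_mean_given l t L s"
      by (simp add: ac_simps)
  qed
qed

lemma AE_park_mean_given_glue_right:
  "AE u in park_cand l (X - 1 - t). u \<in> park_free R \<longrightarrow>
     park_mean_given l X (park_glue t L R) (u + (t + 1)) =
       (1 + park_mean l t L) + park_mean_given l (X - 1 - t) R u"
  using AE_park_cand[where l = l and X = "X - 1 - t"]
    AE_no_tight_slot_insert[OF finite_park_glue[OF L(1) R(1)] tight,
      where l = l and Y = "X - 1 - t" and c = "t + 1"]
proof eventually_elim
  case (elim u)
  show ?case
  proof
    assume uR: "u \<in> park_free R"
    moreover have "L \<subseteq> {..t - 1}" "R \<subseteq> {0..}"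
      using L(2) R(2) by auto
    ultimately have sS: "u + (t + 1) \<in> park_free (park_glue t L R)"
      using park_free_glue_right[of L t R u] elim(1) by simp
    have glue: "park_glue t L (insert u R) = insert (u + (t + 1)) (park_glue t L R)"
      by (simp add: insert_park_glue_right)
    have "park_mean_given l X (park_glue t L R) (u + (t + 1)) =
        park_mean l X (insert (u + (t + 1)) (park_glue t L R))"
      using park_mean_given_eq elim(1) pos(2) sS by (simp add: park_step_eq)
    also have "\<dots> = 1 + park_mean l t L + park_mean l (X - 1 - t) (insert u R)"
      unfolding glue[symmetric] by (rule extend[OF glue sS]) (use elim L R in \<open>auto simp: glue\<close>)
    also have "park_mean l (X - 1 - t) (insert u R) = park_mean_given l (X - 1 - t) R u"
      using park_mean_given_eq elim(1) uR by (simp add: park_step_eq)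
    finally show "park_mean_given l X (park_glue t L R) (u + (t + 1)) =
        (1 + park_mean l t L) + park_mean_given l (X - 1 - t) R u"
      by (simp add: ac_simps)
  qed
qed

lemma park_mean_glue_step:
  "park_mean l X (park_glue t L R) = 1 + park_mean l t L + park_mean l (X - 1 - t) R"
proof -
  let ?S = "park_glue t L R" and ?r = "X - 1 - t"
  let ?\<mu> = "\<lambda>Y T. emeasure (park_cand l Y) (park_free T)"
  define cL where "cL = park_dens_ratio l X t"
  define cR where "cR = exp (- l * (t + 1)) * park_dens_ratio l X ?r"
  have L': "L \<subseteq> {..t - 1}" and R': "R \<subseteq> {0..}"
    using L R by auto
  have "finite ?S"
    using L R by simp
  have "park_mean_given l X ?S \<in> borel_measurable borel"
    using measurable_park_mean_given[OF \<open>finite ?S\<close> _ pos(1)] pos(2,3) by simp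
  then have "?\<mu> X ?S * park_mean l X ?S =
      ennreal cL * (\<integral>\<^sup>+s\<in>park_free L. park_mean_given l X ?S s \<partial>park_cand l t) +
      ennreal cR * (\<integral>\<^sup>+u\<in>park_free R. park_mean_given l X ?S (u + (t + 1)) \<partial>park_cand l ?r)"
    unfolding park_mean_rec[OF \<open>finite ?S\<close> pos(1)] cL_def cR_def
    by (rule set_nn_integral_park_cand_glue[OF pos L' R'])
  also have "\<dots> = ennreal cL * (?\<mu> t L * ((1 + park_mean l ?r R) + park_mean l t L)) +
      ennreal cR * (?\<mu> ?r R * ((1 + park_mean l t L) + park_mean l ?r R))"
    using park_mean_rec_offset[OF L(1) pos(1) AE_park_mean_given_glue_left]
      park_mean_rec_offset[OF R(1) pos(1) AE_park_mean_given_glue_right] by simp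
  also have "\<dots> = ?\<mu> X ?S * (1 + park_mean l t L + park_mean l ?r R)"
    unfolding emeasure_park_cand_glue[OF pos L' R'] cL_def cR_def by (simp add: algebra_simps)
  finally have rec:
    "?\<mu> X ?S * park_mean l X ?S = ?\<mu> X ?S * (1 + park_mean l t L + park_mean l ?r R)" .
  show ?thesis
  proof (cases "?\<mu> X ?S = 0")
    case True
    then show ?thesis
      using park_mean_glue_null[OF pos L(1) L' R(1) R' tight] by simp
  next
    case False
    interpret prob_space "park_cand l X"
      using prob_space_park_cand pos by simp
    show ?thesis
      using rec False emeasure_finite[of "park_free ?S"] by (simp add: ennreal_mult_cancel_left)
  qed
qed

end

lemma park_mean_glue:
  assumes "0 < l" "0 < t" "t < X - 1"
    and "finite L" "L \<subseteq> {0..t - 1}" "finite R" "R \<subseteq> {0..X - 1 - t - 1}"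
    and "separated (park_glue t L R)" "no_tight_slot X (park_glue t L R)"
  shows "park_mean l X (park_glue t L R) = 1 + park_mean l t L + park_mean l (X - 1 - t) R"
  using assms(4-9)
proof (induction "nat \<lfloor>X\<rfloor> - card (park_glue t L R)" arbitrary: L R rule: less_induct)
  case less
  let ?S = "park_glue t L R"
  \<comment> \<open>separated configurations in (0, X) have at most X intervals, so the induction terminates\<close>
  have "park_mean l X (park_glue t L' R') = 1 + park_mean l t L' + park_mean l (X - 1 - t) R'"
    if eq: "park_glue t L' R' = insert s ?S" and s: "s \<in> park_free ?S"
      and "no_tight_slot X (park_glue t L' R')"
      and "finite L'" "L' \<subseteq> {0..t - 1}" "finite R'" "R' \<subseteq> {0..X - 1 - t - 1}" for s L' R'
  proof -
    have "finite ?S"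
      using less.prems by simp
    have sep: "separated (park_glue t L' R')"
      using separated_insert less.prems(5) s unfolding eq by blast
    have "park_glue t L' R' \<subseteq> {0..X - 1}"
      using park_glue_subset assms(2,3) that(4-7) by simp
    then have "real (card (park_glue t L' R')) \<le> X"
      using card_separated_le[OF _ sep, of 0 "X - 1"] that(4,6) assms(2,3) by simp
    moreover have "card (park_glue t L' R') = Suc (card ?S)"
      using park_free_not_in[OF s] \<open>finite ?S\<close> unfolding eq by simp
    ultimately have "nat \<lfloor>X\<rfloor> - card (park_glue t L' R') < nat \<lfloor>X\<rfloor> - card ?S"
      by linarith
    then show ?thesis
      using less.hyps that(3-7) sep by blast
  qed
  then show ?case
    by (rule park_mean_glue_step[OF assms(1-3) less.prems(1-4,6)])
qed

section \<open>The integral equation\<close>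

lemma park_M_eq_enn2real:
  assumes "0 < l"
  shows "park_M l X = enn2real (park_mean l X {})"
proof (cases "X \<le> 1")
  case False
  have "park_final X {} \<in> borel_measurable (stream_space (park_cand l X))"
    by (rule measurable_park_final) simp_all
  moreover have "park_count X = park_final X {}"
    using park_count_eq_park_final False by fastforce
  ultimately show ?thesis
    unfolding park_M_def park_mean_def using False
    by (simp add: integral_eq_nn_integral park_final_nonneg)
qed (simp add: park_M_def park_mean_def)

lemma park_M_nonneg: "0 < l \<Longrightarrow> 0 \<le> park_M l X"
  by (simp add: park_M_eq_enn2real)

lemma park_mean_empty: "0 < l \<Longrightarrow> park_mean l X {} = ennreal (park_M l X)"
  using park_mean_finite[of "{}" l X] by (simp add: park_M_eq_enn2real ennreal_enn2real)

lemma park_mean_given_empty: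
  assumes "0 < l" "0 < s" "s < x" "s \<noteq> 1" "s \<noteq> x - 1"
  shows "park_mean_given l (x + 1) {} s = ennreal (1 + park_M l s + park_M l (x - s))"
proof -
  have "park_mean_given l (x + 1) {} s = park_mean l (x + 1) (park_glue s {} {})"
    using park_mean_given_eq[of s "x + 1" l "{}"] assms
    by (simp add: park_step_eq park_free_def park_glue_def)
  also have "\<dots> = 1 + park_mean l s {} + park_mean l (x + 1 - 1 - s) {}"
    by (rule park_mean_glue)
      (use assms in \<open>auto simp: separated_def no_tight_slot_def park_glue_def\<close>)
  also have "\<dots> = ennreal (1 + park_M l s + park_M l (x - s))"
    using park_mean_empty park_M_nonneg assms(1) by simp
  finally show ?thesis .
qed

lemma park_cand_has_integral:
  assumes "0 < l" "0 < x" and [measurable]: "g \<in> borel_measurable borel" and "\<And>s. 0 \<le> g s"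
    and "(\<integral>\<^sup>+ s. ennreal (g s) \<partial>park_cand l (x + 1)) = ennreal I" "0 \<le> I"
  shows "((\<lambda>s. l * exp (- l * s) / (1 - exp (- l * x)) * g s) has_integral I) {0..x}"
proof -
  let ?f = "\<lambda>s. park_dens l (x + 1) s * g s"
  have "(\<integral>\<^sup>+ s. ennreal (?f s) \<partial>lborel) = ennreal I"
    using assms(4,5) park_dens_nonneg[OF assms(1)] unfolding park_cand_def
    by (simp add: nn_integral_density ennreal_mult)
  then have "(?f has_integral I) UNIV"
    by (rule nn_integral_has_integral[rotated 2])
      (use assms(4,6) park_dens_nonneg[OF assms(1)] in auto)
  moreover have "?f = (\<lambda>s. if s \<in> {0..x} then ?f s else 0)"
    by (auto simp: park_dens_def)
  ultimately have "(?f has_integral I) {0..x}"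
    using has_integral_restrict_UNIV[of "{0..x}" ?f I] by simp
  then show ?thesis
    by (rule has_integral_spike_finite[where S = "{0, x}", rotated 2])
      (auto simp: park_dens_def)
qed

lemma park_M_succ_has_integral:
  assumes "0 < l" "0 < x"
  shows "((\<lambda>s. l * exp (- l * s) / (1 - exp (- l * x)) * (1 + park_M l s + park_M l (x - s)))
           has_integral park_M l (x + 1)) {0..x}"
proof -
  define G where "G s = enn2real (park_mean_given l (x + 1) {} s)" for s
  have G: "park_mean_given l (x + 1) {} s = ennreal (G s) \<and> G s = 1 + park_M l s + park_M l (x - s)"
    if "s \<notin> {1, x - 1}" "0 < s \<and> s < x" for s
    using park_mean_given_empty[OF assms(1), of s x] park_M_nonneg[OF assms(1)] that unfolding G_def
    by (auto simp del: ennreal_plus)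
  have "countable {1, x - 1}"
    by simp
  have "AE s in park_cand l (x + 1). ennreal (G s) = park_mean_given l (x + 1) {} s"
    using AE_park_cand_not_in[OF \<open>countable {1, x - 1}\<close>, where l = l and X = "x + 1"]
      AE_park_cand[where l = l and X = "x + 1"]
    by eventually_elim (use G in auto)
  then have "(\<integral>\<^sup>+ s. ennreal (G s) \<partial>park_cand l (x + 1)) =
      (\<integral>\<^sup>+ s. park_mean_given l (x + 1) {} s \<partial>park_cand l (x + 1))"
    by (rule nn_integral_cong_AE)
  also have "\<dots> = ennreal (park_M l (x + 1))"
    using park_mean_eq_nn_integral[of "{}" "x + 1" l] park_mean_empty assms by simp
  finally have "((\<lambda>s. l * exp (- l * s) / (1 - exp (- l * x)) * G s)
      has_integral park_M l (x + 1)) {0..x}"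
    using measurable_park_mean_given[of "{}" "x + 1" l] assms
    by (intro park_cand_has_integral) (auto simp: G_def park_M_nonneg)
  then show ?thesis
    by (rule has_integral_spike_finite[where S = "{0, 1, x - 1, x}", rotated 2]) (use G in auto)
qed

theorem mainTheorem1:
  fixes l :: real
  assumes "l > 0"
  shows "(\<forall>x. 0 \<le> x \<and> x \<le> 1 \<longrightarrow> park_M l x = 0) \<and>
         (\<forall>x > 0. park_M l (x + 1) =
            integral {0..x} (\<lambda>t. l * exp (- l * t) / (1 - exp (- l * x)) *
                                  (park_M l t + park_M l (x - t))) + 1)"
proof (intro conjI allI impI)
  fix x :: real assume "0 \<le> x \<and> x \<le> 1"
  then show "park_M l x = 0"
    by (simp add: park_M_def)
next
  fix x :: real assume "0 < x"
  define q where "q t = l * exp (- l * t) / (1 - exp (- l * x))" for t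
  have "((\<lambda>t. q t * (1 + park_M l t + park_M l (x - t))) has_integral park_M l (x + 1)) {0..x}"
    using park_M_succ_has_integral[OF assms \<open>0 < x\<close>] unfolding q_def .
  moreover have "(q has_integral 1) {0..x}"
    unfolding q_def using \<open>0 < x\<close> assms by (intro truncated_exp_has_integral) auto
  ultimately have "((\<lambda>t. q t * (1 + park_M l t + park_M l (x - t)) - q t)
      has_integral park_M l (x + 1) - 1) {0..x}"
    by (rule has_integral_diff)
  then have "((\<lambda>t. q t * (park_M l t + park_M l (x - t))) has_integral park_M l (x + 1) - 1) {0..x}"
    by (simp add: algebra_simps)
  then have "integral {0..x} (\<lambda>t. q t * (park_M l t + park_M l (x - t))) = park_M l (x + 1) - 1"
    by (rule integral_unique)
  then show "park_M l (x + 1) = integral {0..x} (\<lambda>t. l * exp (- l * t) / (1 - exp (- l * x)) *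
                                  (park_M l t + park_M l (x - t))) + 1"
    unfolding q_def by linarith
qed

end
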